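(* A language $L$ is regular if and only if there exists a constant-space verifier $V$ that never flips private coins, flips at most a constant number $r$ of public coins on every input (worst case, $r$ independent of the input), has no bound on its running time, and verifies $L$ with some error $\varepsilon<1/2$. In the class notation below: $\mathrm{IP}^{\mathrm{high}}(\mathrm{constant\ space},\ O(1)\ \mathrm{public\ random\ bits},\ \infty\ \mathrm{time})=\mathrm{REG}$.
   Context: Interactive proof systems. A verifier is a probabilistic Turing machine with a read-only input tape containing $\rhd w\lhd$ ($\rhd,\lhd$ end-markers; head starts on $\rhd$), a read-write work tape (initially blank), and a read-write communication cell shared with a prover (initially blank). Its finite state set has (not necessarily disjoint) subsets of private-coin-flipping states, public-coin-flipping states, and communication states (every public-coin state is a communication state), plus accept and reject states. In each step the verifier reads the input symbol, work-tape symbol and communication-cell symbol; if the state flips a private coin it obtains a fair random bit hidden from the prover; if it flips a public coin it obtains a fair random bit that is also revealed to the prover; the transition function then determines the new state, the symbol written on the work tape, the symbol written to the communication cell (if in a communication state), and moves of the input and work heads (left, right, stay). Each time the verifier writes to the communication cell, the prover overwrites it with a symbol that is an arbitrary (not necessarily computable) function of $w$, the history of public coin outcomes, and the communication symbols written so far; the prover does not see private coins, heads, work tape or state. The verifier halts on entering accept/reject; moving the input head beyond an end-marker (unless entering accept) or the work head off the left end means rejection; it may also run forever. $V$ verifies $L$ with error $\varepsilon=\max(\varepsilon^+,\varepsilon^-)$ where $\varepsilon^+,\varepsilon^-<1/2$ if (i) some prover makes $V$ halt and accept every $w\in L$ with probability at least $1-\varepsilon^+$, and (ii) for every prover and every $w\notin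 L$, $V$ halts and rejects with probability at least $1-\varepsilon^-$. A constant-space verifier uses $O(1)$ work-tape cells. $\mathrm{IP}^{\mathrm{high}}(\ldots)$ denotes the class of languages verifiable with some error $\varepsilon<1/2$ by verifiers obeying the listed resource bounds (given as worst-case functions of the input length $n$; a resource type not listed, here private coins, is unavailable; $\infty$ means unbounded). $\mathrm{REG}$ is the class of regular languages. *)

theory Defs
  imports Complex_Main
begin

definition regular :: "'a list set \<Rightarrow> bool" where
  "regular L \<longleftrightarrow> (\<exists>(Q::nat set) q0 F (d :: nat \<Rightarrow> 'a \<Rightarrow> nat).
      finite Q \<and> q0 \<in> Q \<and> (\<forall>q\<in>Q. \<forall>a. d q a \<in> Q) \<and> L = {w. foldl d q0 w \<in> F})"

datatype move = MLeft | MStay | MRight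

fun mv :: "move \<Rightarrow> int" where
  "mv MLeft = -1" | "mv MStay = 0" | "mv MRight = 1"

datatype status = Running | Accepting | Rejecting

datatype 'a tsym = LEnd | REnd | Sym 'a

text \<open>States, work-tape symbols and communication symbols are encoded as naturals;
  the finite state set and finite alphabets are explicit components. The blank
  symbol of the work tape and of the communication cell is None.
  The transition function gets: current state, input symbol, work symbol,
  communication-cell symbol, and the coin outcome (only meaningful in
  public-coin states; it is False otherwise). It returns: new state,
  symbol written on the work tape, symbol written to the communication cell
  (used only in communication states), input head move, work head move.\<close>
record 'a verifier =
  vstates :: "nat set"
  vinit :: nat
  vpub :: "nat set"
  vcomm :: "nat set"
  vacc :: "nat set"
  vrej :: "nat set"
  vwork :: "nat set"
  vcalph :: "nat set"
  vdelta :: "nat \<Rightarrow> 'a tsym \<Rightarrow> nat option \<Rightarrow> nat option \<Rightarrow> bool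
               \<Rightarrow> nat \<times> nat option \<times> nat option \<times> move \<times> move"

definition wf_verifier :: "'a verifier \<Rightarrow> bool" where
  "wf_verifier V \<longleftrightarrow>
     finite (vstates V) \<and> finite (vwork V) \<and> finite (vcalph V) \<and>
     vinit V \<in> vstates V \<and> vpub V \<subseteq> vcomm V \<and> vcomm V \<subseteq> vstates V \<and>
     vacc V \<subseteq> vstates V \<and> vrej V \<subseteq> vstates V \<and> vacc V \<inter> vrej V = {} \<and>
     (\<forall>q\<in>vstates V. \<forall>a g x b.
        g \<in> insert None (Some ` vwork V) \<longrightarrow> x \<in> insert None (Some ` vcalph V) \<longrightarrow>
        (case vdelta V q a g x b of (q', g', x', _, _) \<Rightarrow>
           q' \<in> vstates V \<and> g' \<in> insert None (Some ` vwork V) \<and>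
           x' \<in> insert None (Some ` vcalph V)))"

text \<open>A prover: a function of the input, the public coin history and the
  sequence of communication symbols written by the verifier so far,
  answering with a symbol of the communication alphabet (or blank).\<close>
type_synonym 'a prover = "'a list \<Rightarrow> bool list \<Rightarrow> nat option list \<Rightarrow> nat option"

definition valid_prover :: "'a verifier \<Rightarrow> 'a prover \<Rightarrow> bool" where
  "valid_prover V P \<longleftrightarrow> (\<forall>w cs xs. P w cs xs \<in> insert None (Some ` vcalph V))"

record config =
  cstat :: status
  cstate :: nat
  cinpos :: int
  ctape :: "nat \<Rightarrow> nat option"
  cwpos :: nat
  ccell :: "nat option"
  ccoins :: "bool list"
  ccomms :: "nat option list"

definition insym :: "'a list \<Rightarrow> int \<Rightarrow> 'a tsym" where
  "insym w i = (if i \<le> 0 then LEnd else if i \<ge> int (length w) + 1 then REnd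
                else Sym (w ! nat (i - 1)))"

definition init_config :: "'a verifier \<Rightarrow> config" where
  "init_config V = \<lparr>cstat = (if vinit V \<in> vacc V then Accepting
                             else if vinit V \<in> vrej V then Rejecting else Running),
     cstate = vinit V, cinpos = 0, ctape = (\<lambda>_. None), cwpos = 0, ccell = None,
     ccoins = [], ccomms = []\<rparr>"

text \<open>One step; the coin stream cs supplies the public coin outcomes in order
  (the k-th public coin flipped is cs k).\<close>
definition step :: "'a verifier \<Rightarrow> 'a list \<Rightarrow> 'a prover \<Rightarrow> (nat \<Rightarrow> bool) \<Rightarrow> config \<Rightarrow> config" where
  "step V w P cs c =
    (if cstat c \<noteq> Running then c else
     (let q = cstate c; pub = (q \<in> vpub V); b = cs (length (ccoins c)) in
      case vdelta V q (insym w (cinpos c)) (ctape c (cwpos c)) (ccell c) (pub \<and> b) of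
        (q', g', x', dI, dW) \<Rightarrow>
          (let coins' = (if pub then ccoins c @ [b] else ccoins c);
               comms' = (if q \<in> vcomm V then ccomms c @ [x'] else ccomms c);
               cell' = (if q \<in> vcomm V then P w coins' comms' else ccell c);
               ip' = cinpos c + mv dI;
               wp' = int (cwpos c) + mv dW;
               st' = (if wp' < 0 then Rejecting
                      else if q' \<in> vacc V then Accepting
                      else if ip' < 0 \<or> ip' > int (length w) + 1 then Rejecting
                      else if q' \<in> vrej V then Rejecting else Running)
           in c\<lparr>cstat := st', cstate := q', cinpos := ip',
                 ctape := (ctape c)(cwpos c := g'), cwpos := nat wp', ccell := cell',
                 ccoins := coins', ccomms := comms'\<rparr>)))"

definition run :: "'a verifier \<Rightarrow> 'a list \<Rightarrow> 'a prover \<Rightarrow> (nat \<Rightarrow> bool) \<Rightarrow> nat \<Rightarrow> config" where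
  "run V w P cs n = (step V w P cs ^^ n) (init_config V)"

definition const_space :: "'a verifier \<Rightarrow> bool" where
  "const_space V \<longleftrightarrow> (\<exists>c::nat. \<forall>w P cs n. valid_prover V P \<longrightarrow> cwpos (run V w P cs n) < c)"

definition coin_bounded :: "'a verifier \<Rightarrow> nat \<Rightarrow> bool" where
  "coin_bounded V r \<longleftrightarrow> (\<forall>w P cs n. valid_prover V P \<longrightarrow> length (ccoins (run V w P cs n)) \<le> r)"

definition stream_of :: "bool list \<Rightarrow> nat \<Rightarrow> bool" where
  "stream_of bs i = (if i < length bs then bs ! i else False)"

text \<open>For a verifier flipping at most r fair coins, the probability of an event
  is the fraction of the 2^r equally likely outcome strings of length r.\<close>
definition acc_prob :: "'a verifier \<Rightarrow> nat \<Rightarrow> 'a list \<Rightarrow> 'a prover \<Rightarrow> real" where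
  "acc_prob V r w P = real (card {bs. length bs = r \<and>
      (\<exists>n. cstat (run V w P (stream_of bs) n) = Accepting)}) / 2 ^ r"

definition rej_prob :: "'a verifier \<Rightarrow> nat \<Rightarrow> 'a list \<Rightarrow> 'a prover \<Rightarrow> real" where
  "rej_prob V r w P = real (card {bs. length bs = r \<and>
      (\<exists>n. cstat (run V w P (stream_of bs) n) = Rejecting)}) / 2 ^ r"

definition verifies :: "'a verifier \<Rightarrow> nat \<Rightarrow> 'a list set \<Rightarrow> real \<Rightarrow> bool" where
  "verifies V r L \<epsilon> \<longleftrightarrow> (\<exists>ep em. ep < 1/2 \<and> em < 1/2 \<and> \<epsilon> = max ep em \<and>
      (\<exists>P. valid_prover V P \<and> (\<forall>w\<in>L. acc_prob V r w P \<ge> 1 - ep)) \<and>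
      (\<forall>P. valid_prover V P \<longrightarrow> (\<forall>w. w \<notin> L \<longrightarrow> rej_prob V r w P \<ge> 1 - em)))"

end

theory Submission
  imports Defs
begin

text \<open>
  A DFA is simulated by a verifier that reads its input once from left to right, flipping no
  coins, using no work tape and ignoring the prover.

  Conversely, fix a verifier with work-head bound \<open>cb\<close> flipping at most \<open>r\<close> public coins.
  Given the coin string it is deterministic, so for \<open>w \<in> L\<close> the honest prover makes it accept
  on a majority of the \<open>2^r\<close> coin strings, while for \<open>w \<notin> L\<close> every prover makes it reject on
  a majority. Hence \<open>w \<in> L\<close> iff a single prover forces acceptance on a set \<open>S\<close> of more than
  half of the coin strings.
  Whether a prover can do so is a reachability game whose positions consist of an input head
  position, a local configuration of bounded size and the set of coin suffixes still to be won;
  the winning region is the least fixed point of a monotone operator. By Bekic's principle this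
  fixed point on \<open>u @ v\<close> splits along the border between \<open>u\<close> and \<open>v\<close>, and the contribution
  of \<open>u\<close> depends only on a bounded amount of information about \<open>u\<close>, its type. Words of equal
  type are Myhill-Nerode equivalent, and there are only finitely many types.
\<close>

section \<open>Splitting a least fixed point along a partition\<close>

lemma mono_restrict_union: "mono F \<Longrightarrow> mono (\<lambda>X. F (X \<union> Z) \<inter> A)"
  by (rule monoI) (use monoD[of F] in \<open>blast intro: Un_mono\<close>)

lemma mono_lfp_restrict_union:
  assumes "mono F"
  shows "mono (\<lambda>Z. lfp (\<lambda>X. F (X \<union> (Z - A)) \<inter> A))"
proof (rule monoI)
  fix Z1 Z2 :: "'a set" assume "Z1 \<subseteq> Z2"
  then have "F (X \<union> (Z1 - A)) \<inter> A \<subseteq> F (X \<union> (Z2 - A)) \<inter> A" for X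
    using monoD[OF assms, of "X \<union> (Z1 - A)" "X \<union> (Z2 - A)"] by blast
  then show "lfp (\<lambda>X. F (X \<union> (Z1 - A)) \<inter> A) \<subseteq> lfp (\<lambda>X. F (X \<union> (Z2 - A)) \<inter> A)"
    by (rule lfp_mono)
qed

lemma lfp_partition_split:
  fixes F :: "'x set \<Rightarrow> 'x set" and A :: "'x set"
  assumes mono: "mono F"
  defines "Phi \<equiv> \<lambda>Z. lfp (\<lambda>X. F (X \<union> (Z - A)) \<inter> A)"
  defines "Psi \<equiv> lfp (\<lambda>Z. F (Phi Z \<union> (Z - A)) - A)"
  shows "lfp F = Phi Psi \<union> Psi" and "Psi \<inter> A = {}"
proof -
  have mono_Phi: "mono Phi"
    unfolding Phi_def by (rule mono_lfp_restrict_union[OF mono])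
  have mono_outer: "mono (\<lambda>Z. F (Phi Z \<union> (Z - A)) - A)"
  proof (rule monoI)
    fix Z1 Z2 :: "'x set" assume Z: "Z1 \<subseteq> Z2"
    then have "Phi Z1 \<union> (Z1 - A) \<subseteq> Phi Z2 \<union> (Z2 - A)" using monoD[OF mono_Phi Z] by blast
    then have "F (Phi Z1 \<union> (Z1 - A)) \<subseteq> F (Phi Z2 \<union> (Z2 - A))" by (rule monoD[OF mono])
    then show "F (Phi Z1 \<union> (Z1 - A)) - A \<subseteq> F (Phi Z2 \<union> (Z2 - A)) - A" by blast
  qed
  have Phi_unfold: "Phi Z = F (Phi Z \<union> (Z - A)) \<inter> A" for Z
    unfolding Phi_def by (rule lfp_unfold[OF mono_restrict_union[OF mono]])
  have Psi_unfold: "Psi = F (Phi Psi \<union> (Psi - A)) - A"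
    unfolding Psi_def by (rule lfp_unfold[OF mono_outer])
  define H where "H = F (Phi Psi \<union> (Psi - A))"
  have Psi_H: "Psi = H - A" unfolding H_def by (rule Psi_unfold)
  show disj: "Psi \<inter> A = {}"
    unfolding Psi_H by blast
  have Psi_diff: "Psi - A = Psi" using disj by blast
  have Phi_H: "Phi Psi = H \<inter> A" unfolding H_def by (rule Phi_unfold)
  define W where "W = lfp F"
  have W: "F W = W" unfolding W_def by (rule lfp_unfold[OF mono, symmetric])
  have Phi_le: "Phi (W - A) \<subseteq> W \<inter> A"
    unfolding Phi_def
  proof (rule lfp_lowerbound)
    have "W \<inter> A \<union> (W - A - A) = W" by blast
    then show "F (W \<inter> A \<union> (W - A - A)) \<inter> A \<subseteq> W \<inter> A" using W by simp
  qed
  have Psi_le: "Psi \<subseteq> W - A"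
    unfolding Psi_def
  proof (rule lfp_lowerbound)
    have "Phi (W - A) \<union> (W - A - A) \<subseteq> W" using Phi_le by blast
    then have "F (Phi (W - A) \<union> (W - A - A)) \<subseteq> F W" by (rule monoD[OF mono])
    then show "F (Phi (W - A) \<union> (W - A - A)) - A \<subseteq> W - A" using W by blast
  qed
  have "Phi Psi \<subseteq> Phi (W - A)" by (rule monoD[OF mono_Phi Psi_le])
  then have "Phi Psi \<union> Psi \<subseteq> W" using Phi_le Psi_le by blast
  moreover have "W \<subseteq> Phi Psi \<union> Psi"
    unfolding W_def
  proof (rule lfp_lowerbound)
    have "Phi Psi \<union> Psi = H" using Phi_H Psi_H Int_Diff_Un by metis
    then show "F (Phi Psi \<union> Psi) \<subseteq> Phi Psi \<union> Psi"
      unfolding H_def Psi_diff by (rule equalityD2)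
  qed
  ultimately show "lfp F = Phi Psi \<union> Psi" unfolding W_def by blast
qed

section \<open>The prover's game\<close>

text \<open>A local configuration \<open>(q, t, p, x, k)\<close> consists of the state, the work tape, the
  work-head position, the communication cell and the number of coins flipped so far. The
  input-head position is kept apart, relative to an offset \<open>s\<close>: in a game on \<open>w\<close> with offset
  \<open>s\<close>, the game position \<open>z\<close> stands for the input cell \<open>z + s\<close>. With \<open>s = length u\<close> on
  \<open>u @ v\<close>, the cells of \<open>u\<close> (and the left end-marker) are \<open>z \<le> 0\<close> and those of \<open>v\<close> are \<open>z \<ge> 1\<close>.\<close>
type_synonym lconf = "nat \<times> (nat \<Rightarrow> nat option) \<times> nat \<times> nat option \<times> nat"

text \<open>In a game position \<open>(z, \<sigma>, S)\<close>, \<open>S\<close> is the set of coin suffixes on which the prover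
  still has to force acceptance.\<close>
type_synonym game_pos = "int \<times> lconf \<times> bool list set"

definition comm_syms :: "'a verifier \<Rightarrow> nat option set" where
  "comm_syms V = insert None (Some ` vcalph V)"

definition lconf_coins :: "lconf \<Rightarrow> nat" where
  "lconf_coins \<sigma> = snd (snd (snd (snd \<sigma>)))"

definition lconf_init :: "'a verifier \<Rightarrow> lconf" where
  "lconf_init V = (vinit V, \<lambda>_. None, 0, None, 0)"

definition lconf_ok :: "'a verifier \<Rightarrow> nat \<Rightarrow> nat \<Rightarrow> lconf \<Rightarrow> bool" where
  "lconf_ok V cb r \<sigma> = (case \<sigma> of (q, t, p, x, k) \<Rightarrow> q \<in> vstates V \<and> p < cb \<and>
     (\<forall>j. t j \<in> insert None (Some ` vwork V)) \<and> (\<forall>j. cb \<le> j \<longrightarrow> t j = None) \<and>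
     x \<in> comm_syms V \<and> k \<le> r)"

definition pos_ok :: "'a verifier \<Rightarrow> nat \<Rightarrow> nat \<Rightarrow> lconf \<Rightarrow> bool list set \<Rightarrow> bool" where
  "pos_ok V cb r \<sigma> S = (lconf_ok V cb r \<sigma> \<and> (\<forall>bs\<in>S. length bs \<le> r))"

text \<open>Returns the input-head move, the new work-head position (negative means
  rejection) and the new local configuration.\<close>
definition local_step ::
    "'a verifier \<Rightarrow> 'a tsym \<Rightarrow> lconf \<Rightarrow> nat option \<Rightarrow> bool \<Rightarrow> move \<times> int \<times> lconf" where
  "local_step V a \<sigma> y b = (case \<sigma> of (q, t, p, x, k) \<Rightarrow>
     (case vdelta V q a (t p) x (q \<in> vpub V \<and> b) of (q', g', x', dI, dW) \<Rightarrow>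
       (dI, int p + mv dW, (q', t(p := g'), nat (int p + mv dW),
          if q \<in> vcomm V then y else x, if q \<in> vpub V then Suc k else k))))"

definition head_move :: "'a list \<Rightarrow> int \<Rightarrow> int \<Rightarrow> move \<Rightarrow> int option" where
  "head_move w s z d = (if z + mv d + s < 0 \<or> z + mv d + s > int (length w) + 1 then None
     else Some (z + mv d))"

definition move_wins :: "'a verifier \<Rightarrow> nat \<Rightarrow> nat \<Rightarrow> 'a list \<Rightarrow> int \<Rightarrow> game_pos set \<Rightarrow> int
    \<Rightarrow> lconf \<Rightarrow> nat option \<Rightarrow> bool \<Rightarrow> bool list set \<Rightarrow> bool" where
  "move_wins V cb r w s X z \<sigma> y b S' = (case local_step V (insym w (z + s)) \<sigma> y b of (dI, wp, \<sigma>') \<Rightarrow>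
     S' = {} \<or> (0 \<le> wp \<and> fst \<sigma>' \<in> vacc V) \<or>
     (0 \<le> wp \<and> fst \<sigma>' \<notin> vacc V \<and> fst \<sigma>' \<notin> vrej V \<and>
       (\<exists>z'. head_move w s z dI = Some z' \<and> (z', \<sigma>', S') \<in> X \<and> pos_ok V cb r \<sigma>' S')))"

text \<open>In a public-coin state the prover's answer may depend on the coin, and the suffixes
  are split according to their first coin.\<close>
definition win_step :: "'a verifier \<Rightarrow> nat \<Rightarrow> nat \<Rightarrow> 'a list \<Rightarrow> int \<Rightarrow> game_pos set \<Rightarrow> game_pos set" where
  "win_step V cb r w s X = {(z, \<sigma>, S). 0 \<le> z + s \<and> z + s \<le> int (length w) + 1 \<and> pos_ok V cb r \<sigma> S \<and>
     (if fst \<sigma> \<in> vpub V then lconf_coins \<sigma> < r \<and> [] \<notin> S \<and>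
         (\<forall>b. \<exists>y\<in>comm_syms V. move_wins V cb r w s X z \<sigma> y b {bs. b # bs \<in> S})
      else (\<exists>y\<in>comm_syms V. move_wins V cb r w s X z \<sigma> y False S))}"

definition winning :: "'a verifier \<Rightarrow> nat \<Rightarrow> nat \<Rightarrow> 'a list \<Rightarrow> int \<Rightarrow> game_pos set" where
  "winning V cb r w s = lfp (win_step V cb r w s)"

lemma move_wins_mono:
  "X \<subseteq> Y \<Longrightarrow> move_wins V cb r w s X z \<sigma> y b S' \<Longrightarrow> move_wins V cb r w s Y z \<sigma> y b S'"
  unfolding move_wins_def by (auto split: prod.splits)

lemma mono_win_step: "mono (win_step V cb r w s)"
proof (rule monoI)
  fix X Y :: "game_pos set" assume "X \<subseteq> Y"
  then have "move_wins V cb r w s X z \<sigma> y b S' \<Longrightarrow> move_wins V cb r w s Y z \<sigma> y b S'"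
    for z \<sigma> y b S' by (rule move_wins_mono)
  then show "win_step V cb r w s X \<subseteq> win_step V cb r w s Y"
    unfolding win_step_def by (auto split: if_splits; meson)
qed

lemma win_step_pos_ok: "(z, \<sigma>, S) \<in> win_step V cb r w s X \<Longrightarrow> pos_ok V cb r \<sigma> S"
  unfolding win_step_def by auto

lemma abs_mv_le_1: "\<bar>mv d\<bar> \<le> 1"
  by (cases d) auto

lemma head_move_adjacent: "head_move w s z d = Some z' \<Longrightarrow> \<bar>z' - z\<bar> \<le> 1"
  unfolding head_move_def using abs_mv_le_1[of d] by (auto split: if_splits)

lemma win_step_local:
  assumes "\<And>z' \<sigma>' S'. \<bar>z' - z\<bar> \<le> 1 \<Longrightarrow> pos_ok V cb r \<sigma>' S' \<Longrightarrow>
    (z', \<sigma>', S') \<in> X \<longleftrightarrow> (z', \<sigma>', S') \<in> Y"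
  shows "(z, \<sigma>, S) \<in> win_step V cb r w s X \<longleftrightarrow> (z, \<sigma>, S) \<in> win_step V cb r w s Y"
proof -
  have "move_wins V cb r w s X z \<sigma> y b S' = move_wins V cb r w s Y z \<sigma> y b S'" for y b S'
    unfolding move_wins_def using assms head_move_adjacent by (auto split: prod.splits) blast+
  then show ?thesis unfolding win_step_def by simp
qed

lemma win_step_transfer:
  assumes "insym w (z + s) = insym w' (z + s')" and "\<And>d. head_move w s z d = head_move w' s' z d"
    and "0 \<le> z + s \<and> z + s \<le> int (length w) + 1 \<longleftrightarrow> 0 \<le> z + s' \<and> z + s' \<le> int (length w') + 1"
  shows "(z, \<sigma>, S) \<in> win_step V cb r w s X \<longleftrightarrow> (z, \<sigma>, S) \<in> win_step V cb r w' s' X"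
proof -
  have "move_wins V cb r w s X z \<sigma> y b S' = move_wins V cb r w' s' X z \<sigma> y b S'" for y b S'
    unfolding move_wins_def using assms(1,2) by simp
  then show ?thesis unfolding win_step_def using assms(3) by (simp; blast)
qed

lemma insym_append_right:
  assumes "z \<ge> 1" shows "insym (u @ v) (z + int (length u)) = insym v z"
proof -
  have "nat (z + int (length u) - 1) = length u + nat (z - 1)" using assms by auto
  then show ?thesis using assms unfolding insym_def by (auto simp: nth_append)
qed

lemma insym_append_left:
  "z \<le> 0 \<Longrightarrow> insym (u @ v) (z + int (length u)) = insym u (z + int (length u))"
  unfolding insym_def by (auto simp: nth_append)

lemma head_move_append_right: "z \<ge> 1 \<Longrightarrow> head_move (u @ v) (int (length u)) z d = head_move v 0 z d"
  unfolding head_move_def using abs_mv_le_1[of d] by auto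

lemma head_move_append_left:
  "z \<le> 0 \<Longrightarrow> head_move (u @ v) (int (length u)) z d = head_move u (int (length u)) z d"
  unfolding head_move_def using abs_mv_le_1[of d] by auto

lemma win_step_append_right:
  "z \<ge> 1 \<Longrightarrow> (z, \<sigma>, S) \<in> win_step V cb r (u @ v) (int (length u)) X \<longleftrightarrow> (z, \<sigma>, S) \<in> win_step V cb r v 0 X"
  by (rule win_step_transfer) (auto simp: insym_append_right head_move_append_right)

lemma win_step_append_left:
  "z \<le> 0 \<Longrightarrow> (z, \<sigma>, S) \<in> win_step V cb r (u @ v) (int (length u)) X \<longleftrightarrow>
     (z, \<sigma>, S) \<in> win_step V cb r u (int (length u)) X"
  by (rule win_step_transfer) (auto simp: insym_append_left head_move_append_left)

subsection \<open>Splitting the game on a concatenation\<close>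

definition left_half :: "game_pos set" where
  "left_half = {e. fst e \<le> 0}"

definition left_win :: "'a verifier \<Rightarrow> nat \<Rightarrow> nat \<Rightarrow> 'a list \<Rightarrow> game_pos set \<Rightarrow> game_pos set" where
  "left_win V cb r u Z = lfp (\<lambda>X. win_step V cb r u (int (length u)) (X \<union> (Z - left_half)) \<inter> left_half)"

definition right_win :: "'a verifier \<Rightarrow> nat \<Rightarrow> nat \<Rightarrow> 'a list \<Rightarrow> 'a list \<Rightarrow> game_pos set" where
  "right_win V cb r u v =
     lfp (\<lambda>Z. win_step V cb r v 0 (left_win V cb r u Z \<union> (Z - left_half)) - left_half)"

lemma winning_append:
  "winning V cb r (u @ v) (int (length u)) = left_win V cb r u (right_win V cb r u v) \<union> right_win V cb r u v"
  "right_win V cb r u v \<inter> left_half = {}"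
proof -
  let ?F = "win_step V cb r (u @ v) (int (length u))"
  have left: "?F Y \<inter> left_half = win_step V cb r u (int (length u)) Y \<inter> left_half" for Y
    by (auto simp: left_half_def win_step_append_left)
  have right: "?F Y - left_half = win_step V cb r v 0 Y - left_half" for Y
    by (auto simp: left_half_def win_step_append_right)
  note split = lfp_partition_split[OF mono_win_step, of V cb r "u @ v" "int (length u)" left_half]
  show "winning V cb r (u @ v) (int (length u)) = left_win V cb r u (right_win V cb r u v) \<union> right_win V cb r u v"
    using split(1) unfolding winning_def left right left_win_def[symmetric] right_win_def[symmetric] .
  show "right_win V cb r u v \<inter> left_half = {}"
    using split(2) unfolding left right left_win_def[symmetric] right_win_def[symmetric] .
qed

lemma left_win_subset: "left_win V cb r u Z \<subseteq> left_half"
  unfolding left_win_def by (subst lfp_unfold[OF mono_restrict_union[OF mono_win_step]]) blast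

lemma left_win_pos_ok: "(z, \<sigma>, S) \<in> left_win V cb r u Z \<Longrightarrow> pos_ok V cb r \<sigma> S"
  unfolding left_win_def
  by (subst (asm) lfp_unfold[OF mono_restrict_union[OF mono_win_step]]) (blast dest: win_step_pos_ok)

text \<open>The input head moves by at most one cell, so the \<open>u\<close> side sees the other side only
  through the cell \<open>z = 1\<close>.\<close>
lemma left_win_cong:
  assumes "\<And>\<sigma> S. pos_ok V cb r \<sigma> S \<Longrightarrow> (1, \<sigma>, S) \<in> Z \<longleftrightarrow> (1, \<sigma>, S) \<in> Z'"
  shows "left_win V cb r u Z = left_win V cb r u Z'"
proof -
  have "(z, \<sigma>, S) \<in> win_step V cb r u (int (length u)) (X \<union> (Z - left_half)) \<inter> left_half \<longleftrightarrow>
        (z, \<sigma>, S) \<in> win_step V cb r u (int (length u)) (X \<union> (Z' - left_half)) \<inter> left_half"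
    for X z \<sigma> S
  proof (cases "z \<le> 0")
    case True
    have "(z', \<sigma>', S') \<in> X \<union> (Z - left_half) \<longleftrightarrow> (z', \<sigma>', S') \<in> X \<union> (Z' - left_half)"
      if "\<bar>z' - z\<bar> \<le> 1" "pos_ok V cb r \<sigma>' S'" for z' \<sigma>' S'
    proof (cases "z' \<le> 0")
      case False
      then have "z' = 1" using that(1) True by auto
      then show ?thesis using assms[OF that(2)] by (auto simp: left_half_def)
    qed (auto simp: left_half_def)
    then have "(z, \<sigma>, S) \<in> win_step V cb r u (int (length u)) (X \<union> (Z - left_half)) \<longleftrightarrow>
               (z, \<sigma>, S) \<in> win_step V cb r u (int (length u)) (X \<union> (Z' - left_half))"
      by (rule win_step_local)
    then show ?thesis by blast
  qed (auto simp: left_half_def)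
  then show ?thesis unfolding left_win_def by (metis (no_types, lifting) prod_cases3 set_eqI)
qed

definition boundary_pos :: "'a verifier \<Rightarrow> nat \<Rightarrow> nat \<Rightarrow> (lconf \<times> bool list set) set" where
  "boundary_pos V cb r = {(\<sigma>, S). pos_ok V cb r \<sigma> S}"

definition at_boundary :: "(lconf \<times> bool list set) set \<Rightarrow> game_pos set" where
  "at_boundary Y = (\<lambda>(\<sigma>, S). (1, \<sigma>, S)) ` Y"

definition boundary_trace :: "'a verifier \<Rightarrow> nat \<Rightarrow> nat \<Rightarrow> game_pos set \<Rightarrow> (lconf \<times> bool list set) set" where
  "boundary_trace V cb r Z = {(\<sigma>, S). pos_ok V cb r \<sigma> S \<and> (1, \<sigma>, S) \<in> Z}"

lemma at_boundary_iff [simp]: "(z, \<sigma>, S) \<in> at_boundary Y \<longleftrightarrow> z = 1 \<and> (\<sigma>, S) \<in> Y"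
  unfolding at_boundary_def by force

lemma boundary_trace_iff [simp]:
  "(\<sigma>, S) \<in> boundary_trace V cb r Z \<longleftrightarrow> pos_ok V cb r \<sigma> S \<and> (1, \<sigma>, S) \<in> Z"
  unfolding boundary_trace_def by auto

lemma left_win_boundary_trace:
  "left_win V cb r u Z = left_win V cb r u (at_boundary (boundary_trace V cb r Z))"
  by (rule left_win_cong) simp

text \<open>The type of \<open>u\<close>: for every set \<open>Y\<close> of boundary positions assumed won, the positions at the
  border cell \<open>z = 0\<close> (flag \<open>True\<close>) and the initial positions (flag \<open>False\<close>) won on the \<open>u\<close> side.\<close>
definition left_type :: "'a verifier \<Rightarrow> nat \<Rightarrow> nat \<Rightarrow> 'a list
    \<Rightarrow> ((lconf \<times> bool list set) set \<times> bool \<times> lconf \<times> bool list set) set" where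
  "left_type V cb r u = {(Y, border, \<sigma>, S). Y \<subseteq> boundary_pos V cb r \<and>
     (if border then (0, \<sigma>, S) \<in> left_win V cb r u (at_boundary Y)
      else \<sigma> = lconf_init V \<and> (- int (length u), \<sigma>, S) \<in> left_win V cb r u (at_boundary Y))}"

lemma left_win_border_iff:
  "(0, \<sigma>, S) \<in> left_win V cb r u Z \<longleftrightarrow> (boundary_trace V cb r Z, True, \<sigma>, S) \<in> left_type V cb r u"
  unfolding left_type_def using left_win_boundary_trace[of V cb r u Z]
  by (auto simp: boundary_trace_def boundary_pos_def)

lemma left_win_init_iff:
  "(- int (length u), lconf_init V, S) \<in> left_win V cb r u Z \<longleftrightarrow>
     (boundary_trace V cb r Z, False, lconf_init V, S) \<in> left_type V cb r u"
  unfolding left_type_def using left_win_boundary_trace[of V cb r u Z]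
  by (auto simp: boundary_trace_def boundary_pos_def)

lemma right_win_left_type_cong:
  assumes "left_type V cb r u = left_type V cb r u'"
  shows "right_win V cb r u v = right_win V cb r u' v"
proof -
  have "(z, \<sigma>, S) \<in> win_step V cb r v 0 (left_win V cb r u Z \<union> (Z - left_half)) - left_half \<longleftrightarrow>
        (z, \<sigma>, S) \<in> win_step V cb r v 0 (left_win V cb r u' Z \<union> (Z - left_half)) - left_half"
    for Z z \<sigma> S
  proof (cases "z \<ge> 1")
    case True
    have "(z', \<sigma>', S') \<in> left_win V cb r u Z \<union> (Z - left_half) \<longleftrightarrow>
          (z', \<sigma>', S') \<in> left_win V cb r u' Z \<union> (Z - left_half)"
      if "\<bar>z' - z\<bar> \<le> 1" for z' \<sigma>' S'
    proof (cases "z' = 0")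
      case True
      then show ?thesis using assms left_win_border_iff[of \<sigma>' S' V cb r _ Z] by simp
    next
      case False
      then have "z' \<ge> 1" using that \<open>z \<ge> 1\<close> by auto
      then show ?thesis using left_win_subset[of V cb r u Z] left_win_subset[of V cb r u' Z]
        by (auto simp: left_half_def)
    qed
    then have "(z, \<sigma>, S) \<in> win_step V cb r v 0 (left_win V cb r u Z \<union> (Z - left_half)) \<longleftrightarrow>
               (z, \<sigma>, S) \<in> win_step V cb r v 0 (left_win V cb r u' Z \<union> (Z - left_half))"
      by (rule win_step_local)
    then show ?thesis by blast
  qed (auto simp: left_half_def)
  then show ?thesis unfolding right_win_def by (metis (no_types, lifting) prod_cases3 set_eqI)
qed

lemma winning_init_left_type_cong:
  assumes "left_type V cb r u = left_type V cb r u'"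
  shows "(- int (length u), lconf_init V, S) \<in> winning V cb r (u @ v) (int (length u)) \<longleftrightarrow>
         (- int (length u'), lconf_init V, S) \<in> winning V cb r (u' @ v) (int (length u'))"
proof -
  have "(- int (length x), lconf_init V, S) \<in> winning V cb r (x @ v) (int (length x)) \<longleftrightarrow>
        (boundary_trace V cb r (right_win V cb r x v), False, lconf_init V, S) \<in> left_type V cb r x" for x
    using winning_append[of V cb r x v] left_win_init_iff[of x V S cb r "right_win V cb r x v"]
    by (auto simp: left_half_def)
  then show ?thesis using assms right_win_left_type_cong[OF assms, of v] by metis
qed

lemma finite_boundary_pos:
  assumes "finite (vstates V)" "finite (vwork V)" "finite (vcalph V)"
  shows "finite (boundary_pos V cb r)"
proof -
  let ?T = "{t :: nat \<Rightarrow> nat option. \<forall>j. (j \<in> {..<cb} \<longrightarrow> t j \<in> insert None (Some ` vwork V)) \<and>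
    (j \<notin> {..<cb} \<longrightarrow> t j = None)}"
  let ?B = "{bs :: bool list. set bs \<subseteq> UNIV \<and> length bs \<le> r}"
  have "boundary_pos V cb r \<subseteq> (vstates V \<times> ?T \<times> {..<cb} \<times> comm_syms V \<times> {..r}) \<times> Pow ?B"
    unfolding boundary_pos_def pos_ok_def lconf_ok_def by auto
  moreover have "finite ?T" by (rule finite_set_of_finite_funs) (use assms in auto)
  moreover have "finite ?B" by (rule finite_lists_length_le) auto
  ultimately show ?thesis
    using assms by (metis (no_types, lifting) comm_syms_def finite_Pow_iff finite_SigmaI finite_atMost
      finite_imageI finite_insert finite_lessThan finite_subset)
qed

lemma finite_range_left_type:
  assumes "finite (vstates V)" "finite (vwork V)" "finite (vcalph V)"
  shows "finite (range (left_type V cb r))"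
proof (rule finite_subset)
  show "range (left_type V cb r) \<subseteq> Pow (Pow (boundary_pos V cb r) \<times> UNIV \<times> boundary_pos V cb r)"
    unfolding left_type_def by (auto simp: boundary_pos_def dest: left_win_pos_ok split: if_splits)
  show "finite (Pow (Pow (boundary_pos V cb r) \<times> (UNIV :: bool set) \<times> boundary_pos V cb r))"
    using finite_boundary_pos[OF assms] by auto
qed

section \<open>Runs of a verifier\<close>

definition lconf_of :: "config \<Rightarrow> lconf" where
  "lconf_of c = (cstate c, ctape c, cwpos c, ccell c, length (ccoins c))"

definition status_after :: "'a verifier \<Rightarrow> 'a list \<Rightarrow> int \<Rightarrow> int \<Rightarrow> nat \<Rightarrow> status" where
  "status_after V w ip wp q' = (if wp < 0 then Rejecting else if q' \<in> vacc V then Accepting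
      else if ip < 0 \<or> ip > int (length w) + 1 then Rejecting
      else if q' \<in> vrej V then Rejecting else Running)"

definition accepts_from :: "'a verifier \<Rightarrow> 'a list \<Rightarrow> 'a prover \<Rightarrow> config \<Rightarrow> bool list \<Rightarrow> bool" where
  "accepts_from V w P c bs \<longleftrightarrow>
     (\<exists>n. cstat ((step V w P (stream_of (ccoins c @ bs)) ^^ n) c) = Accepting)"

lemma step_lconf:
  assumes "cstat c = Running"
  shows "case local_step V (insym w (cinpos c)) (lconf_of c) (ccell (step V w P cs c)) (cs (length (ccoins c))) of
     (dI, wp, \<sigma>') \<Rightarrow> lconf_of (step V w P cs c) = \<sigma>' \<and> cinpos (step V w P cs c) = cinpos c + mv dI \<and>
        cstat (step V w P cs c) = status_after V w (cinpos c + mv dI) wp (fst \<sigma>')"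
proof -
  obtain q' g' x' dI dW where "vdelta V (cstate c) (insym w (cinpos c)) (ctape c (cwpos c)) (ccell c)
      (cstate c \<in> vpub V \<and> cs (length (ccoins c))) = (q', g', x', dI, dW)" by (metis prod_cases5)
  then show ?thesis
    using assms unfolding step_def local_step_def lconf_of_def status_after_def Let_def by simp
qed

lemma local_step_noncomm: "fst \<sigma> \<notin> vcomm V \<Longrightarrow> local_step V a \<sigma> y b = local_step V a \<sigma> y' b"
  unfolding local_step_def by (auto split: prod.splits)

lemma ccoins_step:
  "ccoins (step V w P cs c) = (if cstat c = Running \<and> cstate c \<in> vpub V
     then ccoins c @ [cs (length (ccoins c))] else ccoins c)"
  unfolding step_def Let_def by (auto split: prod.splits)

lemma length_ccomms_step:
  "length (ccomms (step V w P cs c)) = (if cstat c = Running \<and> cstate c \<in> vcomm V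
     then Suc (length (ccomms c)) else length (ccomms c))"
  unfolding step_def Let_def by (auto split: prod.splits)

lemma step_halted: "cstat c \<noteq> Running \<Longrightarrow> step V w P cs c = c"
  unfolding step_def by simp

lemma funpow_step_halted: "cstat c \<noteq> Running \<Longrightarrow> (step V w P cs ^^ n) c = c"
  by (induction n) (auto simp: step_halted)

lemma step_stream_cong:
  assumes "cstat c = Running \<Longrightarrow> cstate c \<in> vpub V \<Longrightarrow> cs (length (ccoins c)) = cs' (length (ccoins c))"
  shows "step V w P cs c = step V w P cs' c"
  using assms unfolding step_def Let_def by (cases "cstate c \<in> vpub V") (auto split: prod.splits)

lemma step_prover_cong:
  assumes "cstat c = Running \<Longrightarrow> cstate c \<in> vcomm V \<Longrightarrow>
     \<forall>xs. length xs = Suc (length (ccomms c)) \<longrightarrow>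
       P1 w (ccoins (step V w P1 cs c)) xs = P2 w (ccoins (step V w P1 cs c)) xs"
  shows "step V w P1 cs c = step V w P2 cs c"
proof (cases "cstat c = Running")
  case True
  obtain q' g' x' dI dW where "vdelta V (cstate c) (insym w (cinpos c)) (ctape c (cwpos c)) (ccell c)
      (cstate c \<in> vpub V \<and> cs (length (ccoins c))) = (q', g', x', dI, dW)" by (metis prod_cases5)
  with True assms show ?thesis
    by (cases "cstate c \<in> vcomm V") (simp_all add: ccoins_step, simp_all add: step_def Let_def)
qed (simp add: step_halted)

lemma funpow_step_prover_cong:
  assumes "\<And>cs' xs'. m < length xs' \<Longrightarrow> take (length h) cs' = h \<Longrightarrow> P1 w cs' xs' = P2 w cs' xs'"
    and "m \<le> length (ccomms c)" and "take (length h) (ccoins c) = h"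
  shows "(step V w P1 cs ^^ n) c = (step V w P2 cs ^^ n) c"
  using assms(2,3)
proof (induction n arbitrary: c)
  case (Suc n)
  have "length h \<le> length (ccoins c)"
    using Suc.prems(2) by (metis length_take min.absorb_iff2 nat_le_linear)
  then have h: "take (length h) (ccoins (step V w P1 cs c)) = h"
    using Suc.prems(2) by (simp add: ccoins_step)
  have "step V w P1 cs c = step V w P2 cs c"
    by (rule step_prover_cong) (use Suc.prems(1) assms(1) h in auto)
  moreover have "m \<le> length (ccomms (step V w P1 cs c))"
    using Suc.prems(1) by (simp add: length_ccomms_step)
  ultimately show ?case using Suc.IH[OF _ h] by (simp del: funpow.simps add: funpow_Suc_right)
qed simp

lemma accepts_from_step:
  assumes "step V w P cs c = c'" and "(step V w P cs ^^ n) c' = (step V w P' cs ^^ n) c'"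
    and "cstat ((step V w P' cs ^^ n) c') = Accepting"
  shows "\<exists>n. cstat ((step V w P cs ^^ n) c) = Accepting"
  using assms by (intro exI[of _ "Suc n"]) (simp del: funpow.simps add: funpow_Suc_right)

lemma stream_of_append_length: "stream_of (xs @ b # ys) (length xs) = b"
  unfolding stream_of_def by (simp add: nth_append)

lemma run_Suc: "run V w P cs (Suc n) = step V w P cs (run V w P cs n)"
  unfolding run_def by simp

lemma run_stream_cong:
  "(\<And>i. i < length (ccoins (run V w P cs n)) \<Longrightarrow> cs i = cs' i) \<Longrightarrow> run V w P cs' n = run V w P cs n"
proof (induction n)
  case (Suc n)
  let ?c = "run V w P cs n"
  have "length (ccoins ?c) \<le> length (ccoins (run V w P cs (Suc n)))"
    unfolding run_Suc ccoins_step by simp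
  then have "run V w P cs' n = ?c" using Suc by simp
  moreover have "step V w P cs' ?c = step V w P cs ?c"
  proof (rule step_stream_cong)
    assume "cstat ?c = Running" "cstate ?c \<in> vpub V"
    then have "length (ccoins ?c) < length (ccoins (run V w P cs (Suc n)))"
      unfolding run_Suc ccoins_step by simp
    then show "cs' (length (ccoins ?c)) = cs (length (ccoins ?c))" using Suc.prems by simp
  qed
  ultimately show ?case by (simp add: run_Suc)
qed (simp add: run_def)

lemma run_halted_stays:
  assumes "cstat (run V w P cs n) \<noteq> Running" and "n \<le> m"
  shows "run V w P cs m = run V w P cs n"
proof -
  obtain k where "m = k + n" using assms(2) by (metis add.commute le_Suc_ex)
  then show ?thesis using funpow_step_halted[OF assms(1)] by (simp add: run_def funpow_add)
qed

lemma not_accepts_and_rejects: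
  "cstat (run V w P cs n1) = Accepting \<Longrightarrow> cstat (run V w P cs n2) = Rejecting \<Longrightarrow> False"
  by (metis run_halted_stays nat_le_linear status.distinct(1,3,5))

section \<open>Winning positions are won by some prover\<close>

definition prover_wins :: "'a verifier \<Rightarrow> 'a list \<Rightarrow> int \<Rightarrow> game_pos set" where
  "prover_wins V w s = {(z, \<sigma>, S). \<forall>c. cstat c = Running \<longrightarrow> cinpos c = z + s \<longrightarrow> lconf_of c = \<sigma> \<longrightarrow>
     (\<exists>P. valid_prover V P \<and> (\<forall>bs\<in>S. accepts_from V w P c bs))}"

lemma step_const_prover:
  assumes "cstat c = Running" and "cs (length (ccoins c)) = b"
  shows "case local_step V (insym w (cinpos c)) (lconf_of c) y b of (dI, wp, \<sigma>') \<Rightarrow>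
     lconf_of (step V w (\<lambda>_ _ _. y) cs c) = \<sigma>' \<and> cinpos (step V w (\<lambda>_ _ _. y) cs c) = cinpos c + mv dI \<and>
     cstat (step V w (\<lambda>_ _ _. y) cs c) = status_after V w (cinpos c + mv dI) wp (fst \<sigma>')"
proof -
  have "local_step V (insym w (cinpos c)) (lconf_of c) (ccell (step V w (\<lambda>_ _ _. y) cs c)) b =
        local_step V (insym w (cinpos c)) (lconf_of c) y b"
  proof (cases "cstate c \<in> vcomm V")
    case True
    then show ?thesis using assms(1) by (simp add: step_def Let_def split: prod.splits)
  qed (simp add: local_step_noncomm lconf_of_def)
  then show ?thesis using step_lconf[OF assms(1), of V w "\<lambda>_ _ _. y" cs] assms(2) by simp
qed

lemma move_wins_prover_wins:
  assumes win: "move_wins V cb r w s (prover_wins V w s) z \<sigma> y b S'"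
    and c: "cstat c = Running" "cinpos c = z + s" "lconf_of c = \<sigma>"
  shows "\<exists>P. valid_prover V P \<and>
    (\<forall>bs\<in>S'. accepts_from V w P (step V w (\<lambda>_ _ _. y) (stream_of (ccoins c @ [b])) c) bs)"
proof -
  define c' where "c' = step V w (\<lambda>_ _ _. y) (stream_of (ccoins c @ [b])) c"
  obtain dI wp \<sigma>' where ls: "local_step V (insym w (z + s)) \<sigma> y b = (dI, wp, \<sigma>')"
    by (metis prod_cases3)
  have c': "lconf_of c' = \<sigma>'" "cinpos c' = z + s + mv dI"
    "cstat c' = status_after V w (z + s + mv dI) wp (fst \<sigma>')"
    using step_const_prover[OF c(1), of "stream_of (ccoins c @ [b])" b V w y] ls c
    by (simp_all add: c'_def stream_of_append_length[of _ _ "[]", simplified])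
  have valid_None: "valid_prover V (\<lambda>_ _ _. None)"
    by (simp add: valid_prover_def)
  consider "S' = {}" | "0 \<le> wp" "fst \<sigma>' \<in> vacc V"
    | z' where "0 \<le> wp" "fst \<sigma>' \<notin> vacc V" "fst \<sigma>' \<notin> vrej V" "head_move w s z dI = Some z'"
      "(z', \<sigma>', S') \<in> prover_wins V w s"
    using win ls unfolding move_wins_def by auto
  then show ?thesis
  proof cases
    case 2
    then have "cstat c' = Accepting" using c' by (simp add: status_after_def)
    then have "accepts_from V w P c' bs" for P bs
      unfolding accepts_from_def by (metis funpow_0)
    then show ?thesis using valid_None unfolding c'_def by blast
  next
    case (3 z')
    then have "cstat c' = Running" "cinpos c' = z' + s"
      using c' by (auto simp: status_after_def head_move_def algebra_simps split: if_splits)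
    then show ?thesis using 3(5) c'(1) unfolding prover_wins_def c'_def by auto
  qed (use valid_None in blast)
qed

lemma prover_wins_private_step:
  assumes c: "cstat c = Running" "cstate c \<notin> vpub V" and y: "y \<in> comm_syms V"
    and P': "valid_prover V P'"
      "\<forall>bs\<in>S. accepts_from V w P' (step V w (\<lambda>_ _ _. y) (stream_of (ccoins c @ [False])) c) bs"
  shows "\<exists>P. valid_prover V P \<and> (\<forall>bs\<in>S. accepts_from V w P c bs)"
proof -
  let ?m = "length (ccomms c)"
  define c' where "c' = step V w (\<lambda>_ _ _. y) (stream_of (ccoins c @ [False])) c"
  define P where "P = (if cstate c \<in> vcomm V
    then (\<lambda>w' cs' xs'. if length xs' = Suc ?m then y else P' w' cs' xs') else P')"
  have "valid_prover V P" using P'(1) y unfolding P_def valid_prover_def comm_syms_def by auto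
  moreover have "accepts_from V w P c bs" if bsS: "bs \<in> S" for bs
  proof -
    let ?cs = "stream_of (ccoins c @ bs)"
    have "ccoins c' = ccoins c" unfolding c'_def by (simp add: ccoins_step c(2))
    then obtain n where n: "cstat ((step V w P' ?cs ^^ n) c') = Accepting"
      using P'(2) bsS unfolding accepts_from_def c'_def by auto
    have "step V w P ?cs c = step V w P (stream_of (ccoins c @ [False])) c"
      by (rule step_stream_cong) (use c(2) in simp)
    also have "\<dots> = c'" unfolding c'_def
      by (rule step_prover_cong) (simp add: P_def)
    finally have first: "step V w P ?cs c = c'" .
    have "(step V w P ?cs ^^ n) c' = (step V w P' ?cs ^^ n) c'"
    proof (cases "cstate c \<in> vcomm V")
      case True
      show ?thesis
      proof (rule funpow_step_prover_cong[where m = "Suc ?m" and h = "[]"])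
        show "Suc ?m \<le> length (ccomms c')" unfolding c'_def by (simp add: length_ccomms_step True c(1))
      qed (use True in \<open>auto simp: P_def\<close>)
    qed (simp add: P_def)
    then show ?thesis using accepts_from_step[OF first _ n] unfolding accepts_from_def by blast
  qed
  ultimately show ?thesis by blast
qed

text \<open>In a public-coin state the prover sees the coin (entry \<open>length (ccoins c)\<close> of the coin
  history) before answering, so it can follow a different continuation \<open>Q b\<close> for each outcome \<open>b\<close>.\<close>
lemma prover_wins_public_step:
  assumes c: "cstat c = Running" "cstate c \<in> vpub V" "cstate c \<in> vcomm V" and "[] \<notin> S"
    and y: "\<And>b. y b \<in> comm_syms V" and Q: "\<And>b. valid_prover V (Q b)"
    and acc: "\<And>b bs. b # bs \<in> S \<Longrightarrow>
      accepts_from V w (Q b) (step V w (\<lambda>_ _ _. y b) (stream_of (ccoins c @ [b])) c) bs"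
  shows "\<exists>P. valid_prover V P \<and> (\<forall>bs\<in>S. accepts_from V w P c bs)"
proof -
  let ?m = "length (ccomms c)" and ?k = "length (ccoins c)"
  define P where "P = (\<lambda>w' cs' xs'. if length xs' = Suc ?m then y (cs' ! ?k)
    else if Suc ?m < length xs' then Q (cs' ! ?k) w' cs' xs' else None)"
  have "valid_prover V P" using y Q unfolding P_def valid_prover_def comm_syms_def by auto
  moreover have "accepts_from V w P c bs" if bsS: "bs \<in> S" for bs
  proof -
    obtain b bs' where bs: "bs = b # bs'" using bsS \<open>[] \<notin> S\<close> by (cases bs) auto
    let ?cs = "stream_of (ccoins c @ bs)"
    define c' where "c' = step V w (\<lambda>_ _ _. y b) (stream_of (ccoins c @ [b])) c"
    have coin: "stream_of (ccoins c @ [b]) ?k = b" "?cs ?k = b"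
      using stream_of_append_length[of "ccoins c" b "[]"] by (simp_all add: bs stream_of_append_length)
    have cc: "ccoins c' = ccoins c @ [b]" unfolding c'_def by (simp add: ccoins_step c(1,2) coin)
    then obtain n where n: "cstat ((step V w (Q b) ?cs ^^ n) c') = Accepting"
      using acc[of b bs'] bsS unfolding accepts_from_def bs c'_def by auto
    have "step V w P ?cs c = step V w P (stream_of (ccoins c @ [b])) c"
      by (rule step_stream_cong) (simp add: coin)
    also have "\<dots> = c'" unfolding c'_def
      by (rule step_prover_cong) (simp add: P_def ccoins_step c(1,2) coin)
    finally have first: "step V w P ?cs c = c'" .
    have "(step V w P ?cs ^^ n) c' = (step V w (Q b) ?cs ^^ n) c'"
    proof (rule funpow_step_prover_cong[where m = "Suc ?m" and h = "ccoins c @ [b]"])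
      fix cs' :: "bool list" and xs' :: "nat option list"
      assume "Suc ?m < length xs'" "take (length (ccoins c @ [b])) cs' = ccoins c @ [b]"
      moreover from this(2) have "cs' ! ?k = b"
        by (metis length_append_singleton lessI nth_append_length nth_take)
      ultimately show "P w cs' xs' = Q b w cs' xs'" unfolding P_def by auto
    qed (use c cc in \<open>simp_all add: c'_def length_ccomms_step\<close>)
    then show ?thesis using accepts_from_step[OF first _ n] unfolding accepts_from_def by blast
  qed
  ultimately show ?thesis by blast
qed

lemma win_step_prover_wins:
  assumes "vpub V \<subseteq> vcomm V"
  shows "win_step V cb r w s (prover_wins V w s) \<subseteq> prover_wins V w s"
proof (clarify)
  fix z \<sigma> S assume step: "(z, \<sigma>, S) \<in> win_step V cb r w s (prover_wins V w s)"
  show "(z, \<sigma>, S) \<in> prover_wins V w s" unfolding prover_wins_def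
  proof (clarify)
    fix c assume c: "cstat c = Running" "cinpos c = z + s" "\<sigma> = lconf_of c"
    then have q: "fst \<sigma> = cstate c" by (simp add: lconf_of_def)
    show "\<exists>P. valid_prover V P \<and> (\<forall>bs\<in>S. accepts_from V w P c bs)"
    proof (cases "cstate c \<in> vpub V")
      case True
      have wins: "\<forall>b. \<exists>y\<in>comm_syms V. move_wins V cb r w s (prover_wins V w s) z \<sigma> y b {bs. b # bs \<in> S}"
        and "[] \<notin> S"
        using step True q unfolding win_step_def by auto
      have "\<exists>y\<in>comm_syms V. \<exists>Q. valid_prover V Q \<and> (\<forall>bs\<in>{bs. b # bs \<in> S}.
          accepts_from V w Q (step V w (\<lambda>_ _ _. y) (stream_of (ccoins c @ [b])) c) bs)" for b
        using wins move_wins_prover_wins[OF _ c(1,2) c(3)[symmetric]] by blast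
      then obtain y Q where "\<And>b. y b \<in> comm_syms V" "\<And>b. valid_prover V (Q b)"
        "\<And>b bs. b # bs \<in> S \<Longrightarrow>
           accepts_from V w (Q b) (step V w (\<lambda>_ _ _. y b) (stream_of (ccoins c @ [b])) c) bs"
        by (metis mem_Collect_eq)
      with \<open>[] \<notin> S\<close> show ?thesis
        using prover_wins_public_step[OF c(1) True] True assms by blast
    next
      case False
      then obtain y where "y \<in> comm_syms V" "move_wins V cb r w s (prover_wins V w s) z \<sigma> y False S"
        using step q unfolding win_step_def by auto
      then show ?thesis
        using move_wins_prover_wins[OF _ c(1,2) c(3)[symmetric]] prover_wins_private_step[OF c(1) False]
        by blast
    qed
  qed
qed

lemma winning_subset_prover_wins:
  "vpub V \<subseteq> vcomm V \<Longrightarrow> winning V cb r w s \<subseteq> prover_wins V w s"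
  unfolding winning_def by (rule lfp_lowerbound) (rule win_step_prover_wins)

section \<open>Positions won by a prover are winning\<close>

inductive reachable :: "'a verifier \<Rightarrow> 'a list \<Rightarrow> 'a prover \<Rightarrow> config \<Rightarrow> bool" for V w P where
  reachable_init: "reachable V w P (init_config V)"
| reachable_step: "reachable V w P c \<Longrightarrow> reachable V w P (step V w P cs c)"

lemma reachable_run: "reachable V w P c \<Longrightarrow> \<exists>cs n. c = run V w P cs n"
proof (induction rule: reachable.induct)
  case reachable_init
  have "init_config V = run V w P (\<lambda>_. False) 0" by (simp add: run_def)
  then show ?case by blast
next
  case (reachable_step c cs')
  then obtain cs n where c: "c = run V w P cs n" by auto
  define cs'' where "cs'' = (\<lambda>i. if i < length (ccoins c) then cs i else cs' i)"
  have "run V w P cs'' n = c" using run_stream_cong[of V w P cs n cs''] c unfolding cs''_def by auto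
  moreover have "step V w P cs'' c = step V w P cs' c"
    by (rule step_stream_cong) (simp add: cs''_def)
  ultimately show ?case by (metis run_Suc)
qed

definition work_bounded :: "'a verifier \<Rightarrow> nat \<Rightarrow> bool" where
  "work_bounded V cb \<longleftrightarrow> (\<forall>w P cs n. valid_prover V P \<longrightarrow> cwpos (run V w P cs n) < cb)"

lemma wf_verifier_vdelta:
  assumes "wf_verifier V" "q \<in> vstates V" "g \<in> insert None (Some ` vwork V)" "x \<in> comm_syms V"
  shows "case vdelta V q a g x b of (q', g', x', _, _) \<Rightarrow>
           q' \<in> vstates V \<and> g' \<in> insert None (Some ` vwork V) \<and> x' \<in> comm_syms V"
proof -
  have "\<forall>q\<in>vstates V. \<forall>a g x b. g \<in> insert None (Some ` vwork V) \<longrightarrow> x \<in> comm_syms V \<longrightarrow>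
        (case vdelta V q a g x b of (q', g', x', _, _) \<Rightarrow>
           q' \<in> vstates V \<and> g' \<in> insert None (Some ` vwork V) \<and> x' \<in> comm_syms V)"
    using assms(1) unfolding wf_verifier_def comm_syms_def by (elim conjE)
  then show ?thesis using assms(2-4) by (elim ballE allE impE) auto
qed

definition accepts_within :: "'a verifier \<Rightarrow> 'a list \<Rightarrow> 'a prover \<Rightarrow> nat \<Rightarrow> config \<Rightarrow> bool list \<Rightarrow> bool" where
  "accepts_within V w P N c bs \<longleftrightarrow>
     (\<exists>n\<le>N. cstat ((step V w P (stream_of (ccoins c @ bs)) ^^ n) c) = Accepting)"

lemma not_accepts_within_0: "cstat c = Running \<Longrightarrow> \<not> accepts_within V w P 0 c bs"
  unfolding accepts_within_def by simp

lemma accepts_within_successor: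
  assumes "cstat c = Running" and "accepts_within V w P (Suc N) c bs"
    and "step V w P (stream_of (ccoins c @ bs)) c = c'" and "ccoins c' @ bs' = ccoins c @ bs"
  shows "accepts_within V w P N c' bs'"
proof -
  obtain n where n: "n \<le> Suc N" "cstat ((step V w P (stream_of (ccoins c @ bs)) ^^ n) c) = Accepting"
    using assms(2) unfolding accepts_within_def by blast
  with assms(1) obtain n' where "n = Suc n'" by (cases n) auto
  with n assms(3,4) show ?thesis
    unfolding accepts_within_def by (auto simp del: funpow.simps simp: funpow_Suc_right)
qed

context
  fixes V :: "'a verifier" and w :: "'a list" and P :: "'a prover" and cb r :: nat and s :: int
  assumes wf: "wf_verifier V" and valid: "valid_prover V P"
    and bounded: "work_bounded V cb" and coins: "coin_bounded V r"
begin

lemma reachable_cwpos: "reachable V w P c \<Longrightarrow> cwpos c < cb"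
  using reachable_run bounded valid unfolding work_bounded_def by blast

lemma reachable_ccoins: "reachable V w P c \<Longrightarrow> length (ccoins c) \<le> r"
  using reachable_run coins valid unfolding coin_bounded_def by blast

lemma reachable_invariant:
  "reachable V w P c \<Longrightarrow> cstate c \<in> vstates V \<and> (\<forall>j. ctape c j \<in> insert None (Some ` vwork V)) \<and>
     (\<forall>j. cb \<le> j \<longrightarrow> ctape c j = None) \<and> ccell c \<in> comm_syms V \<and>
     (cstat c = Running \<longrightarrow> 0 \<le> cinpos c \<and> cinpos c \<le> int (length w) + 1)"
proof (induction rule: reachable.induct)
  case reachable_init
  then show ?case using wf unfolding init_config_def wf_verifier_def comm_syms_def by auto
next
  case (reachable_step c cs)
  show ?case
  proof (cases "cstat c = Running")
    case True
    let ?b = "cstate c \<in> vpub V \<and> cs (length (ccoins c))"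
    obtain q' g' x' dI dW where d: "vdelta V (cstate c) (insym w (cinpos c)) (ctape c (cwpos c)) (ccell c) ?b
        = (q', g', x', dI, dW)"
      by (metis prod_cases5)
    have "q' \<in> vstates V" "g' \<in> insert None (Some ` vwork V)"
      using wf_verifier_vdelta[OF wf, of "cstate c" "ctape c (cwpos c)" "ccell c" "insym w (cinpos c)" ?b]
        reachable_step.IH d by auto
    moreover have "P w xs ys \<in> comm_syms V" for xs ys
      using valid unfolding valid_prover_def comm_syms_def by auto
    moreover have "cwpos c < cb" using reachable_step.hyps by (rule reachable_cwpos)
    ultimately show ?thesis
      using True d reachable_step.IH by (auto simp: step_def Let_def)
  qed (use reachable_step.IH in \<open>simp add: step_halted\<close>)
qed

lemma reachable_lconf_ok: "reachable V w P c \<Longrightarrow> lconf_ok V cb r (lconf_of c)"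
  using reachable_invariant[of c] reachable_cwpos[of c] reachable_ccoins[of c]
  unfolding lconf_ok_def lconf_of_def by auto

lemma move_wins_of_successor:
  fixes b :: bool
  assumes c: "reachable V w P c" "cstat c = Running"
  defines "c' \<equiv> step V w P (stream_of (ccoins c @ [b])) c"
  assumes len: "\<forall>bs\<in>S'. length bs + length (ccoins c') = r"
    and acc: "\<forall>bs\<in>S'. accepts_within V w P N c' bs"
    and win: "S' \<noteq> {} \<Longrightarrow> cstat c' = Running \<Longrightarrow> (cinpos c' - s, lconf_of c', S') \<in> winning V cb r w s"
  shows "move_wins V cb r w s (winning V cb r w s) (cinpos c - s) (lconf_of c) (ccell c') b S'"
proof -
  obtain dI wp \<sigma>' where ls: "local_step V (insym w (cinpos c)) (lconf_of c) (ccell c') b = (dI, wp, \<sigma>')"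
    by (metis prod_cases3)
  have c': "lconf_of c' = \<sigma>'" "cinpos c' = cinpos c + mv dI"
    "cstat c' = status_after V w (cinpos c + mv dI) wp (fst \<sigma>')"
    using step_lconf[OF c(2), of V w P "stream_of (ccoins c @ [b])"] ls
    by (simp_all add: c'_def stream_of_append_length[of _ _ "[]", simplified])
  have "S' = {} \<or> (0 \<le> wp \<and> fst \<sigma>' \<in> vacc V) \<or>
     (0 \<le> wp \<and> fst \<sigma>' \<notin> vacc V \<and> fst \<sigma>' \<notin> vrej V \<and>
       (\<exists>z'. head_move w s (cinpos c - s) dI = Some z' \<and> (z', \<sigma>', S') \<in> winning V cb r w s \<and> pos_ok V cb r \<sigma>' S'))"
  proof (cases "S' = {}")
    case False
    then obtain bs0 where bs0: "bs0 \<in> S'" by auto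
    have "cstat c' \<noteq> Rejecting"
    proof
      assume rej: "cstat c' = Rejecting"
      obtain n where "cstat ((step V w P (stream_of (ccoins c' @ bs0)) ^^ n) c') = Accepting"
        using acc bs0 unfolding accepts_within_def by blast
      then show False using rej by (simp add: funpow_step_halted)
    qed
    moreover have "pos_ok V cb r \<sigma>' S'"
      using reachable_lconf_ok[of c'] reachable_step[OF c(1)] c'(1) len
      unfolding pos_ok_def c'_def by auto
    moreover have "cstat c' = Running \<Longrightarrow> head_move w s (cinpos c - s) dI = Some (cinpos c' - s)"
      using c' by (auto simp: status_after_def head_move_def split: if_splits)
    ultimately show ?thesis using win[OF False] c'
      by (cases "cstat c'") (auto simp: status_after_def split: if_splits)
  qed simp
  then show ?thesis unfolding move_wins_def using ls by simp
qed

lemma winning_of_successor_moves: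
  assumes c: "reachable V w P c" "cstat c = Running"
    and len: "\<forall>bs\<in>S. length bs + length (ccoins c) = r"
  defines "c' \<equiv> \<lambda>b. step V w P (stream_of (ccoins c @ [b])) c"
  assumes public_moves: "cstate c \<in> vpub V \<Longrightarrow>
      \<forall>b. move_wins V cb r w s (winning V cb r w s) (cinpos c - s) (lconf_of c) (ccell (c' b)) b {bs. b # bs \<in> S}"
    and private_moves: "cstate c \<notin> vpub V \<Longrightarrow>
      move_wins V cb r w s (winning V cb r w s) (cinpos c - s) (lconf_of c) (ccell (c' False)) False S"
  shows "(cinpos c - s, lconf_of c, S) \<in> winning V cb r w s"
proof -
  have c'_reachable: "reachable V w P (c' b)" for b
    unfolding c'_def using c(1) by (rule reachable_step)
  then have comm: "ccell (c' b) \<in> comm_syms V" for b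
    using reachable_invariant by blast
  have "length (ccoins c) < r \<and> [] \<notin> S" if "cstate c \<in> vpub V"
  proof -
    have "ccoins (c' False) = ccoins c @ [False]"
      unfolding c'_def by (simp add: ccoins_step that c(2) stream_of_append_length[of _ _ "[]", simplified])
    then have "length (ccoins c) < r" using reachable_ccoins[OF c'_reachable[of False]] by simp
    then show ?thesis using len by fastforce
  qed
  moreover have "0 \<le> cinpos c \<and> cinpos c \<le> int (length w) + 1"
    using reachable_invariant[OF c(1)] c(2) by blast
  moreover have "pos_ok V cb r (lconf_of c) S"
    using reachable_lconf_ok[OF c(1)] len unfolding pos_ok_def by auto
  ultimately have "(cinpos c - s, lconf_of c, S) \<in> win_step V cb r w s (winning V cb r w s)"
    using public_moves private_moves comm unfolding win_step_def by (auto simp: lconf_of_def lconf_coins_def)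
  then show ?thesis unfolding winning_def using lfp_unfold[OF mono_win_step] by blast
qed

lemma winning_of_accepts_step:
  assumes c: "reachable V w P c" "cstat c = Running"
    and len: "\<forall>bs\<in>S. length bs + length (ccoins c) = r"
    and acc: "\<forall>bs\<in>S. accepts_within V w P (Suc N) c bs"
    and IH: "\<And>c'' S''. S'' \<noteq> {} \<Longrightarrow> reachable V w P c'' \<Longrightarrow> cstat c'' = Running \<Longrightarrow>
       \<forall>bs\<in>S''. length bs + length (ccoins c'') = r \<Longrightarrow> \<forall>bs\<in>S''. accepts_within V w P N c'' bs \<Longrightarrow>
       (cinpos c'' - s, lconf_of c'', S'') \<in> winning V cb r w s"
  shows "(cinpos c - s, lconf_of c, S) \<in> winning V cb r w s"
proof -
  define c' where "c' b = step V w P (stream_of (ccoins c @ [b])) c" for b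
  have branch: "move_wins V cb r w s (winning V cb r w s) (cinpos c - s) (lconf_of c) (ccell (c' b)) b S'"
    if cont: "\<And>bs. bs \<in> S' \<Longrightarrow> \<exists>bs0\<in>S. step V w P (stream_of (ccoins c @ bs0)) c = c' b \<and>
      ccoins (c' b) @ bs = ccoins c @ bs0" for b S'
  proof -
    have "length bs + length (ccoins (c' b)) = r \<and> accepts_within V w P N (c' b) bs"
      if bs: "bs \<in> S'" for bs
    proof -
      obtain bs0 where bs0: "bs0 \<in> S" "step V w P (stream_of (ccoins c @ bs0)) c = c' b"
        "ccoins (c' b) @ bs = ccoins c @ bs0"
        using cont[OF bs] by blast
      have "length (ccoins (c' b) @ bs) = length (ccoins c @ bs0)" using bs0(3) by simp
      moreover have "length bs0 + length (ccoins c) = r" using len bs0(1) by blast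
      ultimately have "length bs + length (ccoins (c' b)) = r" by simp
      moreover have "accepts_within V w P (Suc N) c bs0" using acc bs0(1) by blast
      ultimately show ?thesis using accepts_within_successor[OF c(2) _ bs0(2,3)] by blast
    qed
    then show ?thesis
      using move_wins_of_successor[OF c, where b = b and S' = S' and N = N]
        IH[OF _ reachable_step[OF c(1)]] unfolding c'_def by blast
  qed
  have public_moves: "\<forall>b. move_wins V cb r w s (winning V cb r w s) (cinpos c - s) (lconf_of c) (ccell (c' b)) b
    {bs. b # bs \<in> S}" if "cstate c \<in> vpub V"
  proof
    fix b
    have "step V w P (stream_of (ccoins c @ b # bs)) c = c' b" "ccoins (c' b) = ccoins c @ [b]" for bs
      unfolding c'_def using that c(2)
      by (auto intro: step_stream_cong simp: ccoins_step stream_of_append_length[of _ _ "[]", simplified]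
        stream_of_append_length)
    then show "move_wins V cb r w s (winning V cb r w s) (cinpos c - s) (lconf_of c) (ccell (c' b)) b
      {bs. b # bs \<in> S}" by (intro branch) auto
  qed
  have private_moves: "move_wins V cb r w s (winning V cb r w s) (cinpos c - s) (lconf_of c) (ccell (c' False))
    False S" if "cstate c \<notin> vpub V"
  proof (rule branch)
    have "step V w P (stream_of (ccoins c @ bs)) c = c' False" "ccoins (c' False) = ccoins c" for bs
      unfolding c'_def using that by (auto intro: step_stream_cong simp: ccoins_step)
    then show "\<exists>bs0\<in>S. step V w P (stream_of (ccoins c @ bs0)) c = c' False \<and>
      ccoins (c' False) @ bs = ccoins c @ bs0" if "bs \<in> S" for bs
      using that by auto
  qed
  show ?thesis
    using winning_of_successor_moves[OF c len] public_moves private_moves unfolding c'_def by blast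
qed

lemma winning_of_accepts:
  "reachable V w P c \<Longrightarrow> cstat c = Running \<Longrightarrow> \<forall>bs\<in>S. length bs + length (ccoins c) = r \<Longrightarrow>
   \<forall>bs\<in>S. accepts_within V w P N c bs \<Longrightarrow> (cinpos c - s, lconf_of c, S) \<in> winning V cb r w s"
proof (induction N arbitrary: c S)
  case 0
  then have "S = {}" using not_accepts_within_0 by blast
  then show ?case
    by (intro winning_of_accepts_step[OF 0(1-3), of 0]) (auto dest: not_accepts_within_0)
next
  case (Suc N)
  show ?case by (rule winning_of_accepts_step[OF Suc.prems(1-4) Suc.IH])
qed

end

section \<open>From verifiers to finite automata\<close>

definition accepts :: "'a verifier \<Rightarrow> 'a list \<Rightarrow> 'a prover \<Rightarrow> (nat \<Rightarrow> bool) \<Rightarrow> bool" where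
  "accepts V w P cs \<longleftrightarrow> (\<exists>n. cstat (run V w P cs n) = Accepting)"

definition forces_acceptance :: "'a verifier \<Rightarrow> 'a list \<Rightarrow> bool list set \<Rightarrow> bool" where
  "forces_acceptance V w S \<longleftrightarrow> (\<exists>P. valid_prover V P \<and> (\<forall>bs\<in>S. accepts V w P (stream_of bs)))"

lemma ccoins_init_config [simp]: "ccoins (init_config V) = []"
  and cinpos_init_config [simp]: "cinpos (init_config V) = 0"
  and lconf_of_init_config [simp]: "lconf_of (init_config V) = lconf_init V"
  unfolding init_config_def lconf_of_def lconf_init_def by simp_all

lemma accepts_from_init_config: "accepts_from V w P (init_config V) bs \<longleftrightarrow> accepts V w P (stream_of bs)"
  unfolding accepts_from_def accepts_def run_def by simp

lemma finite_bool_lists: "finite {bs :: bool list. length bs = r}"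
  using finite_lists_length_eq[of "UNIV :: bool set" r] by simp

lemma winning_of_forces_acceptance:
  assumes wf: "wf_verifier V" and bounded: "work_bounded V cb" and coins: "coin_bounded V r"
    and S: "S \<subseteq> {bs. length bs = r}" and running: "cstat (init_config V) = Running"
    and "forces_acceptance V w S"
  shows "(- s, lconf_init V, S) \<in> winning V cb r w s"
proof -
  obtain P where P: "valid_prover V P" "\<forall>bs\<in>S. accepts V w P (stream_of bs)"
    using assms(6) unfolding forces_acceptance_def by blast
  then obtain f where f: "\<forall>bs\<in>S. cstat (run V w P (stream_of bs) (f bs)) = Accepting"
    unfolding accepts_def by metis
  have "finite S" using finite_bool_lists S by (rule finite_subset[rotated])
  then have "\<forall>bs\<in>S. accepts_within V w P (Max (f ` S)) (init_config V) bs"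
    using f unfolding accepts_within_def run_def by (auto intro!: exI[of _ "f _"])
  moreover have "\<forall>bs\<in>S. length bs + length (ccoins (init_config V)) = r" using S by auto
  ultimately have "(cinpos (init_config V) - s, lconf_of (init_config V), S) \<in> winning V cb r w s"
    by (intro winning_of_accepts[OF wf P(1) bounded coins reachable_init running])
  then show ?thesis by simp
qed

lemma forces_acceptance_of_winning:
  assumes wf: "wf_verifier V" and running: "cstat (init_config V) = Running"
    and "(- s, lconf_init V, S) \<in> winning V cb r w s"
  shows "forces_acceptance V w S"
proof -
  have "vpub V \<subseteq> vcomm V" using wf unfolding wf_verifier_def by blast
  then have "(- s, lconf_init V, S) \<in> prover_wins V w s"
    using winning_subset_prover_wins assms(3) by blast
  then have "\<forall>c. cstat c = Running \<longrightarrow> cinpos c = 0 \<longrightarrow> lconf_of c = lconf_init V \<longrightarrow>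
      (\<exists>P. valid_prover V P \<and> (\<forall>bs\<in>S. accepts_from V w P c bs))"
    unfolding prover_wins_def by simp
  then have "\<exists>P. valid_prover V P \<and> (\<forall>bs\<in>S. accepts_from V w P (init_config V) bs)"
    using running by (auto dest: spec[of _ "init_config V"])
  then show ?thesis
    unfolding forces_acceptance_def accepts_from_init_config .
qed

lemma forces_acceptance_iff_winning:
  assumes wf: "wf_verifier V" and bounded: "work_bounded V cb" and coins: "coin_bounded V r"
    and S: "S \<noteq> {}" "S \<subseteq> {bs. length bs = r}"
  shows "forces_acceptance V w S \<longleftrightarrow>
    vinit V \<in> vacc V \<or> (vinit V \<notin> vrej V \<and> (- s, lconf_init V, S) \<in> winning V cb r w s)"
proof (cases "cstat (init_config V)")
  case Accepting
  then have "accepts V w (\<lambda>_ _ _. None) cs" for cs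
    unfolding accepts_def by (intro exI[of _ 0]) (simp add: run_def)
  moreover have "valid_prover V (\<lambda>_ _ _. None)" unfolding valid_prover_def by simp
  ultimately show ?thesis using Accepting
    unfolding forces_acceptance_def by (auto simp: init_config_def split: if_splits)
next
  case Rejecting
  then have "\<not> accepts V w P cs" for P cs
    unfolding accepts_def run_def by (simp add: funpow_step_halted)
  moreover have "vinit V \<notin> vacc V" "vinit V \<in> vrej V"
    using Rejecting by (auto simp: init_config_def split: if_splits)
  ultimately show ?thesis using S(1) unfolding forces_acceptance_def by auto
next
  case Running
  then have "vinit V \<notin> vacc V" "vinit V \<notin> vrej V"
    by (auto simp: init_config_def split: if_splits)
  then show ?thesis
    using winning_of_forces_acceptance[OF wf bounded coins S(2) Running]
      forces_acceptance_of_winning[OF wf Running] by blast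
qed

lemma majority_of_prob:
  assumes "e < 1 / 2" and "1 - e \<le> real (card A) / 2 ^ r"
  shows "2 ^ r < 2 * card A"
proof -
  have pos: "(0::real) < 2 ^ r" by simp
  have "(1 - e) * 2 ^ r \<le> real (card A)" using assms(2) pos by (simp add: field_simps)
  moreover have "0 < (1 - 2 * e) * 2 ^ r" using assms(1) pos by simp
  moreover have "2 * ((1 - e) * 2 ^ r) = 2 ^ r + (1 - 2 * e) * 2 ^ r" by (simp add: algebra_simps)
  ultimately have "real (2 ^ r) < real (2 * card A)" by simp
  then show ?thesis by (simp only: of_nat_less_iff)
qed

lemma disjoint_majorities:
  fixes A B :: "bool list set"
  assumes "A \<subseteq> {bs. length bs = r}" "B \<subseteq> {bs. length bs = r}" "A \<inter> B = {}"
    and "2 ^ r < 2 * card A"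
  shows "\<not> 2 ^ r < 2 * card B"
proof -
  have "finite A" "finite B"
    using finite_bool_lists assms(1,2) by (auto intro: finite_subset[rotated])
  then have "card A + card B = card (A \<union> B)"
    using assms(3) by (rule card_Un_disjoint[symmetric])
  also have "\<dots> \<le> card {bs :: bool list. length bs = r}"
    using assms(1,2) by (intro card_mono[OF finite_bool_lists]) auto
  also have "\<dots> = 2 ^ r"
    using card_lists_length_eq[of "UNIV :: bool set" r] by simp
  finally show ?thesis using assms(4) by linarith
qed

lemma accepted_minority_if_rejected:
  assumes S: "S \<subseteq> {bs. length bs = r}" "\<forall>bs\<in>S. accepts V w P (stream_of bs)"
    and "e < 1 / 2" and "1 - e \<le> rej_prob V r w P"
  shows "\<not> 2 ^ r < 2 * card S"
proof -
  define R where "R = {bs. length bs = r \<and> (\<exists>n. cstat (run V w P (stream_of bs) n) = Rejecting)}"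
  have "1 - e \<le> real (card R) / 2 ^ r" using assms(4) unfolding rej_prob_def R_def .
  then have "2 ^ r < 2 * card R" by (rule majority_of_prob[OF assms(3)])
  moreover have "R \<inter> S = {}"
  proof (intro equals0I)
    fix bs assume bs: "bs \<in> R \<inter> S"
    then obtain n1 where "cstat (run V w P (stream_of bs) n1) = Accepting"
      using S(2) unfolding accepts_def by blast
    moreover obtain n2 where "cstat (run V w P (stream_of bs) n2) = Rejecting"
      using bs unfolding R_def by blast
    ultimately show False by (rule not_accepts_and_rejects)
  qed
  moreover have "R \<subseteq> {bs. length bs = r}" unfolding R_def by blast
  ultimately show ?thesis using disjoint_majorities S(1) by blast
qed

lemma mem_iff_majority_forced:
  assumes "verifies V r L \<epsilon>"
  shows "w \<in> L \<longleftrightarrow> (\<exists>S \<subseteq> {bs. length bs = r}. 2 ^ r < 2 * card S \<and> forces_acceptance V w S)"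
proof -
  obtain ep em where e: "ep < 1/2" "em < 1/2"
    and honest: "\<exists>P. valid_prover V P \<and> (\<forall>w\<in>L. acc_prob V r w P \<ge> 1 - ep)"
    and sound: "\<forall>P. valid_prover V P \<longrightarrow> (\<forall>w. w \<notin> L \<longrightarrow> rej_prob V r w P \<ge> 1 - em)"
    using assms unfolding verifies_def by blast
  show ?thesis
  proof
    assume "w \<in> L"
    then obtain P where P: "valid_prover V P" "acc_prob V r w P \<ge> 1 - ep" using honest by blast
    define A where "A = {bs. length bs = r \<and> accepts V w P (stream_of bs)}"
    have "1 - ep \<le> real (card A) / 2 ^ r"
      using P(2) unfolding acc_prob_def A_def accepts_def .
    then have "2 ^ r < 2 * card A" by (rule majority_of_prob[OF e(1)])
    moreover have "forces_acceptance V w A"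
      using P(1) unfolding forces_acceptance_def A_def by blast
    moreover have "A \<subseteq> {bs. length bs = r}" unfolding A_def by blast
    ultimately show "\<exists>S \<subseteq> {bs. length bs = r}. 2 ^ r < 2 * card S \<and> forces_acceptance V w S"
      by blast
  next
    assume "\<exists>S \<subseteq> {bs. length bs = r}. 2 ^ r < 2 * card S \<and> forces_acceptance V w S"
    then obtain S P where S: "S \<subseteq> {bs. length bs = r}" "2 ^ r < 2 * card S" "valid_prover V P"
      "\<forall>bs\<in>S. accepts V w P (stream_of bs)"
      unfolding forces_acceptance_def by blast
    show "w \<in> L"
    proof (rule ccontr)
      assume "w \<notin> L"
      then have "1 - em \<le> rej_prob V r w P" using sound S(3) by blast
      then show False using accepted_minority_if_rejected[OF S(1,4) e(2)] S(2) by blast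
    qed
  qed
qed

lemma regular_of_finite_residuals:
  fixes L :: "'a list set"
  assumes "finite (range (\<lambda>u. {v. u @ v \<in> L}))"
  shows "regular L"
proof -
  define R where "R = (\<lambda>u. {v. u @ v \<in> L})"
  obtain f :: "'a list set \<Rightarrow> nat" and n where f: "f ` range R = {i. i < n}" "inj_on f (range R)"
    using finite_imp_inj_to_nat_seg[OF assms[folded R_def]] by blast
  define d where "d = (\<lambda>q a. f {v. a # v \<in> the_inv_into (range R) f q})"
  have "{v. a # v \<in> R u} = R (u @ [a])" for u a unfolding R_def by auto
  then have d: "d (f (R u)) a = f (R (u @ [a]))" for u a
    unfolding d_def using the_inv_into_f_f[OF f(2), of "R u"] by simp
  have fold: "foldl d (f (R u)) w = f (R (u @ w))" for u w
    by (induction w arbitrary: u) (simp_all add: d)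
  have "w \<in> L \<longleftrightarrow> foldl d (f (R [])) w \<in> f ` {X \<in> range R. [] \<in> X}" for w
  proof -
    have "f (R w) \<in> f ` {X \<in> range R. [] \<in> X} \<longleftrightarrow> [] \<in> R w"
      using f(2) by (auto simp: inj_on_eq_iff)
    then show ?thesis unfolding fold by (simp add: R_def)
  qed
  moreover have "finite (f ` range R)" using assms by (simp add: R_def)
  moreover have "\<forall>q\<in>f ` range R. \<forall>a. d q a \<in> f ` range R" using d by auto
  moreover have "f (R []) \<in> f ` range R" by simp
  ultimately show ?thesis unfolding regular_def by blast
qed

lemma regular_of_finite_index:
  fixes L :: "'a list set" and T :: "'a list \<Rightarrow> 'b"
  assumes fin: "finite (range T)"
    and cong: "\<And>u u' v. T u = T u' \<Longrightarrow> u @ v \<in> L \<longleftrightarrow> u' @ v \<in> L"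
  shows "regular L"
proof (rule regular_of_finite_residuals)
  have "range (\<lambda>u. {v. u @ v \<in> L}) \<subseteq> (\<lambda>t. {v. (SOME u. T u = t) @ v \<in> L}) ` range T"
  proof clarify
    fix u
    have "T (SOME u'. T u' = T u) = T u" by (rule someI) simp
    then have "{v. u @ v \<in> L} = {v. (SOME u'. T u' = T u) @ v \<in> L}" using cong by blast
    then show "{v. u @ v \<in> L} \<in> (\<lambda>t. {v. (SOME u. T u = t) @ v \<in> L}) ` range T" by blast
  qed
  then show "finite (range (\<lambda>u. {v. u @ v \<in> L}))" using fin finite_subset by blast
qed

lemma regular_if_verified:
  assumes wf: "wf_verifier V" and space: "const_space V" and coins: "coin_bounded V r"
    and ver: "verifies V r L \<epsilon>"
  shows "regular L"
proof -
  obtain cb where bounded: "work_bounded V cb"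
    using space unfolding const_space_def work_bounded_def by blast
  have "finite (vstates V)" "finite (vwork V)" "finite (vcalph V)"
    using wf by (simp_all add: wf_verifier_def)
  then have fin: "finite (range (left_type V cb r))" by (rule finite_range_left_type)
  define wins where "wins u v S \<longleftrightarrow> vinit V \<in> vacc V \<or>
    (vinit V \<notin> vrej V \<and> (- int (length u), lconf_init V, S) \<in> winning V cb r (u @ v) (int (length u)))"
    for u v S
  have forces: "forces_acceptance V (u @ v) S \<longleftrightarrow> wins u v S"
    if "S \<subseteq> {bs. length bs = r}" "2 ^ r < 2 * card S" for u v S
  proof -
    have "S \<noteq> {}" using that(2) by (intro notI) simp
    then show ?thesis unfolding wins_def by (rule forces_acceptance_iff_winning[OF wf bounded coins _ that(1)])
  qed
  then have mem: "u @ v \<in> L \<longleftrightarrow> (\<exists>S \<subseteq> {bs. length bs = r}. 2 ^ r < 2 * card S \<and> wins u v S)" for u v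
    unfolding mem_iff_majority_forced[OF ver] using forces by auto
  show ?thesis
  proof (rule regular_of_finite_index[OF fin])
    fix u u' v assume type: "left_type V cb r u = left_type V cb r u'"
    have "wins u v S \<longleftrightarrow> wins u' v S" for S
      unfolding wins_def using winning_init_left_type_cong[OF type, of S v] by simp
    then show "u @ v \<in> L \<longleftrightarrow> u' @ v \<in> L" unfolding mem by simp
  qed
qed

section \<open>From finite automata to verifiers\<close>

text \<open>State \<open>q + 2\<close> simulates the DFA state \<open>q\<close>; \<open>0\<close> accepts and \<open>1\<close> rejects.\<close>
definition dfa_delta :: "nat set \<Rightarrow> (nat \<Rightarrow> 'a \<Rightarrow> nat) \<Rightarrow> nat \<Rightarrow> 'a tsym \<Rightarrow> nat option \<Rightarrow> nat option
    \<Rightarrow> bool \<Rightarrow> nat \<times> nat option \<times> nat option \<times> move \<times> move" where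
  "dfa_delta F d q a g x b = (if 2 \<le> q then (case a of
        LEnd \<Rightarrow> (q, None, None, MRight, MStay)
      | Sym c \<Rightarrow> (d (q - 2) c + 2, None, None, MRight, MStay)
      | REnd \<Rightarrow> (if q - 2 \<in> F then 0 else 1, None, None, MStay, MStay))
    else (q, None, None, MStay, MStay))"

definition dfa_verifier :: "nat set \<Rightarrow> nat \<Rightarrow> nat set \<Rightarrow> (nat \<Rightarrow> 'a \<Rightarrow> nat) \<Rightarrow> 'a verifier" where
  "dfa_verifier Q q0 F d = \<lparr>vstates = {0, 1} \<union> (\<lambda>q. q + 2) ` Q, vinit = q0 + 2, vpub = {}, vcomm = {},
     vacc = {0}, vrej = {1}, vwork = {}, vcalph = {}, vdelta = dfa_delta F d\<rparr>"

lemma wf_dfa_verifier: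
  assumes "finite Q" "q0 \<in> Q" "\<forall>q\<in>Q. \<forall>a. d q a \<in> Q"
  shows "wf_verifier (dfa_verifier Q q0 F d)"
  unfolding wf_verifier_def dfa_verifier_def using assms
  by (auto simp: dfa_delta_def split: tsym.splits)

lemma cwpos_dfa_verifier: "cwpos (run (dfa_verifier Q q0 F d) w P cs n) = 0"
proof (induction n)
  case (Suc n)
  let ?V = "dfa_verifier Q q0 F d" and ?c = "run (dfa_verifier Q q0 F d) w P cs n"
  show ?case
  proof (cases "cstat ?c = Running")
    case True
    obtain q' g' x' dI dW where step: "vdelta ?V (cstate ?c) (insym w (cinpos ?c)) (ctape ?c (cwpos ?c))
        (ccell ?c) (cstate ?c \<in> vpub ?V \<and> cs (length (ccoins ?c))) = (q', g', x', dI, dW)"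
      by (metis prod_cases5)
    moreover have "snd (snd (snd (snd (vdelta ?V q a g x b)))) = MStay" for q a g x b
      unfolding dfa_verifier_def dfa_delta_def by (auto split: tsym.splits)
    ultimately have "dW = MStay" by (metis snd_conv)
    then show ?thesis using True step Suc by (simp add: run_Suc step_def Let_def)
  qed (use Suc in \<open>simp add: run_Suc step_halted\<close>)
qed (simp add: run_def init_config_def)

lemma ccoins_dfa_verifier: "ccoins (run (dfa_verifier Q q0 F d) w P cs n) = []"
  by (induction n) (simp_all add: run_def init_config_def ccoins_step dfa_verifier_def)

lemma dfa_verifier_run_prefix:
  assumes "j \<le> length w"
  shows "cstat (run (dfa_verifier Q q0 F d) w P cs (Suc j)) = Running \<and>
    cinpos (run (dfa_verifier Q q0 F d) w P cs (Suc j)) = int j + 1 \<and>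
    cstate (run (dfa_verifier Q q0 F d) w P cs (Suc j)) = foldl d q0 (take j w) + 2"
  using assms
proof (induction j)
  case 0
  show ?case by (simp add: run_def init_config_def step_def Let_def dfa_verifier_def dfa_delta_def insym_def)
next
  case (Suc j)
  then have "j < length w" by simp
  then have "insym w (int j + 1) = Sym (w ! j)"
    and "foldl d q0 (take (Suc j) w) = d (foldl d q0 (take j w)) (w ! j)"
    by (simp_all add: insym_def take_Suc_conv_app_nth)
  then show ?case
    using Suc by (simp add: run_Suc step_def Let_def dfa_verifier_def dfa_delta_def)
qed

lemma dfa_verifier_run_final:
  "cstat (run (dfa_verifier Q q0 F d) w P cs (Suc (Suc (length w)))) =
     (if foldl d q0 w \<in> F then Accepting else Rejecting)"
proof -
  have "insym w (int (length w) + 1) = REnd" unfolding insym_def by auto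
  then show ?thesis
    using dfa_verifier_run_prefix[of "length w" w Q q0 F d P cs]
    by (simp add: run_Suc step_def Let_def dfa_verifier_def dfa_delta_def)
qed

lemma verified_if_regular:
  assumes "regular L"
  shows "\<exists>(V :: 'a verifier) r \<epsilon>. wf_verifier V \<and> const_space V \<and> coin_bounded V r \<and>
    \<epsilon> < 1/2 \<and> verifies V r L \<epsilon>"
proof -
  obtain Q q0 F and d :: "nat \<Rightarrow> 'a \<Rightarrow> nat" where dfa: "finite Q" "q0 \<in> Q" "\<forall>q\<in>Q. \<forall>a. d q a \<in> Q"
    and L: "L = {w. foldl d q0 w \<in> F}"
    using assms unfolding regular_def by blast
  let ?V = "dfa_verifier Q q0 F d"
  have "const_space ?V" unfolding const_space_def by (intro exI[of _ 1]) (simp add: cwpos_dfa_verifier)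
  moreover have "coin_bounded ?V 0" unfolding coin_bounded_def by (simp add: ccoins_dfa_verifier)
  moreover have "verifies ?V 0 L 0"
  proof -
    have single: "{bs :: bool list. length bs = 0 \<and> X} = (if X then {[]} else {})" for X by auto
    have "acc_prob ?V 0 w P = 1" if "w \<in> L" for w P
    proof -
      have "\<exists>n. cstat (run ?V w P (stream_of bs) n) = Accepting" for bs
        using dfa_verifier_run_final[of Q q0 F d w P] that L by auto
      then show ?thesis unfolding acc_prob_def single by simp
    qed
    moreover have "rej_prob ?V 0 w P = 1" if "w \<notin> L" for w P
    proof -
      have "\<exists>n. cstat (run ?V w P (stream_of bs) n) = Rejecting" for bs
        using dfa_verifier_run_final[of Q q0 F d w P] that L by auto
      then show ?thesis unfolding rej_prob_def single by simp
    qed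
    moreover have "valid_prover ?V (\<lambda>_ _ _. None)" unfolding valid_prover_def by simp
    ultimately show ?thesis unfolding verifies_def by (intro exI[of _ 0]) auto
  qed
  ultimately show ?thesis using wf_dfa_verifier[OF dfa] by (intro exI[of _ ?V] exI[of _ 0]) auto
qed

theorem theorem2:
  fixes L :: "('a::finite) list set"
  shows "regular L \<longleftrightarrow>
    (\<exists>(V::'a verifier) r \<epsilon>. wf_verifier V \<and> const_space V \<and> coin_bounded V r \<and>
        \<epsilon> < 1/2 \<and> verifies V r L \<epsilon>)"
  using verified_if_regular regular_if_verified by metis

end
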